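(* Let $a,a^\dagger$ be the annihilation and creation operators of the harmonic oscillator, $[a,a^\dagger]=1$, with vacuum $|0\rangle$ ($a|0\rangle=0$, $\langle0|a^\dagger=0$, $\langle0|0\rangle=1$). For positive integers $n$ let $A_n^\dagger$ act on the formal span of $\{(a^\dagger)^m|0\rangle\}_{m\ge0}$ by $A_n^\dagger(a^\dagger)^m|0\rangle=\frac{m!}{(mn)!}(a^\dagger)^{mn}|0\rangle$, and let $A_n$ act from the right on the formal span of $\{\langle0|a^m\}_{m\ge0}$ by $\langle0|a^mA_n=\langle0|a^{mn}$. Then for $\mathrm{Re}(s)>1$, $$\zeta(s)=\langle0|\,a\Big(\prod_{q\text{ prime}}\frac{1}{1-A_q}\Big)(a^\dagger a)^{-s}\Big(\prod_{p\text{ prime}}\frac{1}{1-A_p^\dagger}\Big)a^\dagger\,|0\rangle,$$ where $\zeta(s)=\sum_{n\ge1}n^{-s}$ is the Riemann zeta function.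
   Context: The number states $|n\rangle=(a^\dagger)^n|0\rangle/\sqrt{n!}$ are orthonormal and $(a^\dagger a)^{-s}$ acts by $(a^\dagger a)^{-s}|n\rangle=n^{-s}|n\rangle$ for $n\ge1$. The products $\prod_p\frac{1}{1-A_p^\dagger}$, with $\frac{1}{1-A_p^\dagger}=\sum_{k\ge0}(A_p^\dagger)^k$, are expanded formally (the $A_p^\dagger$ commute), applied to $a^\dagger|0\rangle$ coefficientwise, similarly for the $A_q$ acting on $\langle0|a$, and the resulting pairing is evaluated termwise. *)

theory Defs
  imports "HOL-Analysis.Analysis" "HOL-Computational_Algebra.Primes"
begin

text \<open>States are represented by their coordinates in the orthonormal number basis:
  a ket \<open>\<psi> :: nat \<Rightarrow> complex\<close> stands for \<open>\<Sum>j. \<psi> j |j\<rangle>\<close> and a bra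
  \<open>\<phi> :: nat \<Rightarrow> complex\<close> stands for \<open>\<Sum>j. \<phi> j \<langle>j|\<close> (finitely supported).\<close>

type_synonym state = "nat \<Rightarrow> complex"

definition vac :: state where
  "vac = (\<lambda>j. if j = 0 then 1 else 0)"

definition cre :: "state \<Rightarrow> state" where
  "cre \<psi> = (\<lambda>j. case j of 0 \<Rightarrow> 0 | Suc i \<Rightarrow> complex_of_real (sqrt (real (Suc i))) * \<psi> i)"

text \<open>Right multiplication of a bra by the annihilation operator: \<open>\<langle>j| a = sqrt(j+1)\<langle>j+1|\<close>.\<close>
definition bra_ann :: "state \<Rightarrow> state" where
  "bra_ann \<phi> = (\<lambda>j. case j of 0 \<Rightarrow> 0 | Suc i \<Rightarrow> complex_of_real (sqrt (real (Suc i))) * \<phi> i)"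

definition supp :: "state \<Rightarrow> nat set" where
  "supp \<psi> = {m. \<psi> m \<noteq> 0}"

text \<open>\<open>A\<^sub>n\<^sup>\<dagger>\<close>: linear extension of \<open>(a\<^sup>\<dagger>)\<^sup>m|0\<rangle> \<mapsto> m!/(mn)! (a\<^sup>\<dagger>)\<^sup>m\<^sup>n|0\<rangle>\<close>, using
  \<open>(a\<^sup>\<dagger>)\<^sup>m|0\<rangle> = sqrt(m!) |m\<rangle>\<close> to read off the coordinate of \<open>\<psi>\<close> along \<open>(a\<^sup>\<dagger>)\<^sup>m|0\<rangle>\<close>.\<close>
definition A_dag :: "nat \<Rightarrow> state \<Rightarrow> state" where
  "A_dag n \<psi> = (\<lambda>j. \<Sum>m\<in>supp \<psi>.
      (\<psi> m / complex_of_real (sqrt (fact m))) * (fact m / fact (m * n)) * (cre ^^ (m * n)) vac j)"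

text \<open>\<open>A\<^sub>n\<close> acting from the right on bras: linear extension of \<open>\<langle>0|a\<^sup>m \<mapsto> \<langle>0|a\<^sup>m\<^sup>n\<close>,
  using \<open>\<langle>0|a\<^sup>m = sqrt(m!) \<langle>m|\<close>.\<close>
definition A_bra :: "nat \<Rightarrow> state \<Rightarrow> state" where
  "A_bra n \<phi> = (\<lambda>j. \<Sum>m\<in>supp \<phi>.
      (\<phi> m / complex_of_real (sqrt (fact m))) * (bra_ann ^^ (m * n)) vac j)"

text \<open>\<open>(a\<^sup>\<dagger>a)\<^sup>-\<^sup>s |n\<rangle> = n\<^sup>-\<^sup>s |n\<rangle>\<close> (for \<open>n \<ge> 1\<close>; the \<open>|0\<rangle>\<close> component never occurs).\<close>
definition num_pow :: "complex \<Rightarrow> state \<Rightarrow> state" where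
  "num_pow s \<psi> = (\<lambda>j. of_nat j powr (- s) * \<psi> j)"

text \<open>Pairing of a bra with a ket (number states orthonormal).\<close>
definition pairing :: "state \<Rightarrow> state \<Rightarrow> complex" where
  "pairing \<phi> \<psi> = (\<Sum>j\<in>supp \<phi>. \<phi> j * \<psi> j)"

text \<open>Exponent vectors of the formal expansion of \<open>\<Prod>\<^sub>p 1/(1-X\<^sub>p) = \<Sum>\<^sub>k \<Prod>\<^sub>p X\<^sub>p\<^sup>k\<^sup>p\<close>:
  finitely supported functions supported on primes.\<close>
definition exps :: "(nat \<Rightarrow> nat) set" where
  "exps = {k. finite {p. k p \<noteq> 0} \<and> (\<forall>p. k p \<noteq> 0 \<longrightarrow> prime p)}"

text \<open>\<open>\<Prod>\<^sub>p (X\<^sub>p)\<^sup>k\<^sup>p\<close> applied to a state (the operators commute; we use increasing order of p).\<close>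
definition apply_monomial :: "(nat \<Rightarrow> state \<Rightarrow> state) \<Rightarrow> (nat \<Rightarrow> nat) \<Rightarrow> state \<Rightarrow> state" where
  "apply_monomial X k = foldr (\<lambda>p f. (X p ^^ k p) \<circ> f) (sorted_list_of_set {p. k p \<noteq> 0}) id"

definition zeta_series :: "complex \<Rightarrow> complex" where
  "zeta_series s = (\<Sum>n. 1 / (of_nat (Suc n)) powr s)"

end

theory Submission
  imports Defs
begin

text \<open>In the number basis \<open>A\<^sub>n\<^sup>\<dagger>\<close> sends the divided power \<open>(a\<^sup>\<dagger>)\<^sup>m|0\<rangle>/m!\<close> to
  \<open>(a\<^sup>\<dagger>)\<^sup>m\<^sup>n|0\<rangle>/(mn)!\<close> and \<open>A\<^sub>n\<close> sends \<open>\<langle>0|a\<^sup>m\<close> to \<open>\<langle>0|a\<^sup>m\<^sup>n\<close>. Hence the monomial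
  \<open>\<Prod>\<^sub>p (A\<^sub>p\<^sup>\<dagger>)\<^sup>k\<^sup>p\<close> sends \<open>a\<^sup>\<dagger>|0\<rangle>\<close> to \<open>(a\<^sup>\<dagger>)\<^sup>N|0\<rangle>/N!\<close> with \<open>N = \<Prod>\<^sub>p p\<^sup>k\<^sup>p\<close>, and likewise
  on the bra side. Orthonormality kills all off-diagonal pairings, the diagonal term
  for \<open>k\<close> is \<open>N\<^sup>-\<^sup>s\<close>, and by unique factorisation \<open>k \<mapsto> N\<close> is a bijection onto the
  positive integers, so the double sum is the Dirichlet series of \<open>\<zeta>\<close>.\<close>

definition basis_vec :: "complex \<Rightarrow> nat \<Rightarrow> state" where
  "basis_vec c m = (\<lambda>j. if j = m then c else 0)"

lemma supp_basis_vec: "supp (basis_vec c m) = (if c = 0 then {} else {m})"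
  by (auto simp: supp_def basis_vec_def)

lemma num_pow_basis_vec: "num_pow s (basis_vec c m) = basis_vec (of_nat m powr (- s) * c) m"
  by (auto simp: num_pow_def basis_vec_def)

lemma pairing_basis_vec:
  "pairing (basis_vec a m) (basis_vec b n) = (if m = n then a * b else 0)"
  by (simp add: pairing_def supp_basis_vec) (simp add: basis_vec_def)

lemma bra_ann_eq_cre: "bra_ann = cre"
  by (simp add: bra_ann_def cre_def fun_eq_iff)

lemma cre_pow_vac: "(cre ^^ m) vac = basis_vec (sqrt (fact m)) m"
proof (induction m)
  case 0
  then show ?case by (simp add: vac_def basis_vec_def)
next
  case (Suc m)
  then show ?case
    by (auto simp: basis_vec_def cre_def fun_eq_iff real_sqrt_mult split: nat.split)
qed

text \<open>By \<open>cre_pow_vac\<close> these are the ket \<open>(a\<^sup>\<dagger>)\<^sup>m|0\<rangle>/m!\<close> and the bra \<open>\<langle>0|a\<^sup>m\<close>.\<close>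

abbreviation divided_power :: "nat \<Rightarrow> state" where
  "divided_power m \<equiv> basis_vec (1 / sqrt (fact m)) m"

abbreviation bra_ann_power :: "nat \<Rightarrow> state" where
  "bra_ann_power m \<equiv> basis_vec (sqrt (fact m)) m"

lemma A_dag_basis_vec:
  assumes "c \<noteq> 0"
  shows "A_dag n (basis_vec c m)
    = basis_vec (c / sqrt (fact m) * (fact m / fact (m * n)) * sqrt (fact (m * n))) (m * n)"
  using assms by (simp add: A_dag_def supp_basis_vec cre_pow_vac) (simp add: basis_vec_def fun_eq_iff)

lemma A_bra_basis_vec:
  assumes "c \<noteq> 0"
  shows "A_bra n (basis_vec c m) = basis_vec (c / sqrt (fact m) * sqrt (fact (m * n))) (m * n)"
  using assms
  by (simp add: A_bra_def supp_basis_vec bra_ann_eq_cre cre_pow_vac) (simp add: basis_vec_def fun_eq_iff)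

lemma A_dag_divided_power: "A_dag n (divided_power m) = divided_power (m * n)"
proof -
  have "1 / sqrt (fact m) / sqrt (fact m) * (fact m / fact (m * n)) * sqrt (fact (m * n))
      = (1 / sqrt (fact (m * n)) :: real)"
    by (simp add: divide_simps)
  then have "1 / of_real (sqrt (fact m)) / of_real (sqrt (fact m)) * (fact m / fact (m * n))
      * of_real (sqrt (fact (m * n))) = (1 / of_real (sqrt (fact (m * n))) :: complex)"
    by (metis (mono_tags) of_real_1 of_real_divide of_real_fact of_real_mult)
  then show ?thesis
    by (simp add: A_dag_basis_vec del: of_real_fact)
qed

lemma A_bra_bra_ann_power: "A_bra n (bra_ann_power m) = bra_ann_power (m * n)"
  by (simp add: A_bra_basis_vec)

definition nat_of_exps :: "(nat \<Rightarrow> nat) \<Rightarrow> nat" where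
  "nat_of_exps k = (\<Prod>p | k p \<noteq> 0. p ^ k p)"

lemma apply_monomial_multiplicative:
  assumes "\<And>n m. X n (f m) = f (m * n)" and "finite {p. k p \<noteq> 0}"
  shows "apply_monomial X k (f m) = f (m * nat_of_exps k)"
proof -
  have pow: "(X p ^^ j) (f m) = f (m * p ^ j)" for p j m
    by (induction j) (simp_all add: assms(1) mult_ac)
  have "foldr (\<lambda>p g. (X p ^^ k p) \<circ> g) ps id (f m) = f (m * (\<Prod>p\<leftarrow>ps. p ^ k p))" for ps
    by (induction ps arbitrary: m) (simp_all add: pow mult_ac)
  moreover have "(\<Prod>p\<leftarrow>sorted_list_of_set {p. k p \<noteq> 0}. p ^ k p) = (\<Prod>p | k p \<noteq> 0. p ^ k p)"
    using prod.distinct_set_conv_list[of "sorted_list_of_set {p. k p \<noteq> 0}" "\<lambda>p. p ^ k p"] assms(2)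
    by simp
  ultimately show ?thesis
    by (simp only: apply_monomial_def nat_of_exps_def)
qed

lemma multiplicity_nat_of_exps:
  assumes "k \<in> exps" and "prime q"
  shows "multiplicity q (nat_of_exps k) = k q"
  using assms multiplicity_prod_prime_powers[of "{p. k p \<noteq> 0}" q k]
  by (auto simp: exps_def nat_of_exps_def)

lemma bij_betw_nat_of_exps: "bij_betw nat_of_exps exps {0<..}"
proof (rule bij_betwI')
  fix k l assume k: "k \<in> exps" and l: "l \<in> exps"
  show "nat_of_exps k = nat_of_exps l \<longleftrightarrow> k = l"
  proof
    assume eq: "nat_of_exps k = nat_of_exps l"
    show "k = l"
    proof
      fix q
      show "k q = l q"
      proof (cases "prime q")
        case True
        then show ?thesis
          using eq multiplicity_nat_of_exps[OF k True] multiplicity_nat_of_exps[OF l True] by simp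
      next
        case False
        then have "k q = 0" "l q = 0"
          using k l by (auto simp: exps_def)
        then show ?thesis by simp
      qed
    qed
  qed simp
next
  fix k assume "k \<in> exps"
  then show "nat_of_exps k \<in> {0<..}"
    by (auto simp: exps_def nat_of_exps_def prime_gt_0_nat intro!: prod_pos)
next
  fix n :: nat assume "n \<in> {0<..}"
  then have n: "n > 0" by simp
  define k where "k = (\<lambda>p. if prime p then multiplicity p n else 0)"
  have support: "{p. k p \<noteq> 0} = prime_factors n"
    using n by (auto simp: k_def prime_factors_multiplicity)
  have "finite {p. k p \<noteq> 0}"
    unfolding support by simp
  then have "k \<in> exps"
    by (simp add: exps_def k_def)
  moreover have "nat_of_exps k = n"
  proof -
    have "nat_of_exps k = (\<Prod>p\<in>prime_factors n. p ^ multiplicity p n)"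
      unfolding nat_of_exps_def support by (rule prod.cong) (auto simp: k_def)
    also have "\<dots> = n"
      using prod_prime_factors[of n] n by simp
    finally show ?thesis .
  qed
  ultimately show "\<exists>k\<in>exps. n = nat_of_exps k" by blast
qed

lemma apply_monomial_A_dag_cre_vac:
  assumes "k \<in> exps"
  shows "apply_monomial A_dag k (cre vac) = divided_power (nat_of_exps k)"
proof -
  have "cre vac = divided_power 1"
    using cre_pow_vac[of 1] by simp
  then show ?thesis
    using apply_monomial_multiplicative[of A_dag divided_power k 1, OF A_dag_divided_power] assms
    by (simp add: exps_def)
qed

lemma apply_monomial_A_bra_bra_ann_vac:
  assumes "l \<in> exps"
  shows "apply_monomial A_bra l (bra_ann vac) = bra_ann_power (nat_of_exps l)"
proof -
  have "bra_ann vac = bra_ann_power 1"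
    using cre_pow_vac[of 1] by (simp add: bra_ann_eq_cre)
  then show ?thesis
    using apply_monomial_multiplicative[of A_bra bra_ann_power l 1, OF A_bra_bra_ann_power] assms
    by (simp add: exps_def)
qed

lemma matrix_element_monomials:
  assumes "l \<in> exps" and "k \<in> exps"
  shows "pairing (apply_monomial A_bra l (bra_ann vac))
                 (num_pow s (apply_monomial A_dag k (cre vac)))
    = (if l = k then 1 / of_nat (nat_of_exps k) powr s else 0)"
proof -
  have "nat_of_exps l = nat_of_exps k \<longleftrightarrow> l = k"
    using bij_betw_nat_of_exps assms by (auto simp: bij_betw_def inj_on_def)
  moreover have "sqrt (fact n) * (of_nat n powr (- s) * (1 / sqrt (fact n))) = 1 / of_nat n powr s"
    for n :: nat
    by (simp add: powr_minus divide_inverse flip: of_real_mult)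
  ultimately show ?thesis
    using assms
    by (simp add: apply_monomial_A_dag_cre_vac apply_monomial_A_bra_bra_ann_vac
        num_pow_basis_vec pairing_basis_vec del: of_real_fact)
qed

lemma has_sum_diagonal:
  "((\<lambda>(x, y). if x = y then f x else 0) has_sum a) (A \<times> A) \<longleftrightarrow> (f has_sum a) A"
proof -
  let ?g = "\<lambda>(x, y). if x = y then f x else 0"
  have "(?g has_sum a) (A \<times> A) \<longleftrightarrow> (?g has_sum a) ((\<lambda>x. (x, x)) ` A)"
    by (rule has_sum_cong_neutral) auto
  also have "\<dots> \<longleftrightarrow> ((?g \<circ> (\<lambda>x. (x, x))) has_sum a) A"
    by (rule has_sum_reindex) (auto simp: inj_on_def)
  finally show ?thesis
    by (simp add: comp_def)
qed

lemma zeta_series_has_sum: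
  assumes "Re s > 1"
  shows "((\<lambda>n. 1 / of_nat n powr s) has_sum zeta_series s) {0<..}"
proof -
  have "summable (\<lambda>n. real n powr (- Re s))"
    using assms by (subst summable_real_powr_iff) auto
  then have "summable (\<lambda>n. real (Suc n) powr (- Re s))"
    by (subst summable_Suc_iff)
  moreover have norm_term: "norm (1 / of_nat (Suc n) powr s) = real (Suc n) powr (- Re s)" for n
  proof -
    have "norm (of_nat (Suc n) powr s) = real (Suc n) powr Re s"
      by (subst norm_powr_real_powr) auto
    then show ?thesis
      by (simp add: norm_divide norm_inverse powr_minus divide_inverse)
  qed
  ultimately have abs_summable: "summable (\<lambda>n. norm (1 / of_nat (Suc n) powr s))"
    by (simp only: norm_term)
  have "((\<lambda>n. 1 / of_nat (Suc n) powr s) has_sum zeta_series s) UNIV"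
    unfolding zeta_series_def
    using norm_summable_imp_has_sum[OF abs_summable summable_sums[OF summable_norm_cancel]]
      abs_summable .
  moreover have "{0<..} = range Suc"
    using gr0_implies_Suc by auto
  ultimately show ?thesis
    by (simp add: has_sum_reindex comp_def)
qed

theorem mainTheorem6:
  fixes s :: complex
  assumes "Re s > 1"
  shows "((\<lambda>(l, k). pairing (apply_monomial A_bra l (bra_ann vac))
                              (num_pow s (apply_monomial A_dag k (cre vac))))
            has_sum zeta_series s) (exps \<times> exps)"
proof -
  have "((\<lambda>k. 1 / of_nat (nat_of_exps k) powr s) has_sum zeta_series s) exps"
    using has_sum_reindex_bij_betw[OF bij_betw_nat_of_exps, of "\<lambda>n. 1 / of_nat n powr s"]
      zeta_series_has_sum[OF assms]
    by blast
  then have "((\<lambda>(l, k). if l = k then 1 / of_nat (nat_of_exps l) powr s else 0)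
      has_sum zeta_series s) (exps \<times> exps)"
    by (simp add: has_sum_diagonal)
  then show ?thesis
    by (rule has_sum_cong[THEN iffD1, rotated]) (auto simp: matrix_element_monomials)
qed

end
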